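(* Let $r,k,m$ be positive integers and $\alpha$ real with $\alpha>k>r$, such that $\alpha-m$ is not a negative integer and $\alpha\ne m+r-j$, $\alpha\neq m+k-j$ for $j=1,\dots,m$. Then $$\sum_{n=1}^\infty\frac{H_{n+\alpha-m}^{(2)}}{(n+r)(n+k)}=\frac1{k-r}\Bigg\{(r-\alpha)\sum_{j=1}^r\frac{H_{\alpha+j-r}^{(2)}}{j(\alpha+j-r)}-(k-\alpha)\sum_{j=1}^k\frac{H_{\alpha+j-k}^{(2)}}{j(\alpha+j-k)}-\sum_{j=1}^{k-r}\frac{H_{\alpha+j-k}}{(\alpha+j-k)^2}$$ $$+2H_{\alpha-r}^{(3)}+H_{\alpha-k}\zeta(2)+2H_{\alpha-r}H_{\alpha-r}^{(2)}-2H_{\alpha-k}^{(3)}-H_{\alpha-r}\zeta(2)-2H_{\alpha-k}H_{\alpha-k}^{(2)}\Bigg\}$$ $$-\frac1{k-r}\Bigg\{\sum_{j=1}^m\frac{H_{\alpha+j-m}-H_r}{(\alpha+j-m-r)^2}-\sum_{j=1}^m\frac{\zeta(2)-H_{\alpha+j-m}^{(2)}}{\alpha+j-m-r}-\sum_{j=1}^m\frac{H_{\alpha+j-m}-H_k}{(\alpha+j-m-k)^2}+\sum_{j=1}^m\frac{\zeta(2)-H_{\alpha+j-m}^{(2)}}{\alpha+j-m-k}\Bigg\}.$$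
   Context: Shifted harmonic numbers: for a real $\alpha$ that is not a negative integer, $H_\alpha := \sum_{k=1}^\infty\left(\frac1k-\frac1{k+\alpha}\right)$ and, for integers $m\ge 2$, $H_\alpha^{(m)} := \sum_{k=1}^\infty\left(\frac1{k^m}-\frac1{(k+\alpha)^m}\right)=\zeta(m)-\zeta(m,\alpha+1)$, where $\zeta$ is the Riemann zeta function and $\zeta(s,\alpha+1)=\sum_{n=1}^\infty (n+\alpha)^{-s}$ is the Hurwitz zeta function. For nonnegative integers these are the ordinary harmonic numbers. Empty sums are $0$. *)

theory Defs
  imports "HOL-Analysis.Analysis"
begin

definition shifted_harm :: "real \<Rightarrow> real" where
  "shifted_harm a = (\<Sum>k. 1 / real (Suc k) - 1 / (real (Suc k) + a))"

definition shifted_harm_pow :: "nat \<Rightarrow> real \<Rightarrow> real" where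
  "shifted_harm_pow m a = (\<Sum>k. 1 / real (Suc k) ^ m - 1 / (real (Suc k) + a) ^ m)"

definition rzeta :: "nat \<Rightarrow> real" where
  "rzeta m = (\<Sum>k. 1 / real (Suc k) ^ m)"

end

theory Submission
  imports Defs "HOL-Real_Asymp.Real_Asymp"
begin

text \<open>Since H^{(2)}_{x+m} = H^{(2)}_x + \<Sum>_{j=1}^m 1/(x+j)^2, the shift by m splits off finitely many
  series \<Sum>_n 1/((n+g)^2 (n+r)(n+k)), which partial fractions evaluate in terms of H_g, H^{(2)}_g
  and \<zeta>(2). For the unshifted series, 1/((n+r)(n+k)) = (k-r)^{-1} \<Sum>_{c=r}^{k-1} 1/((n+c)(n+c+1)),
  and each \<Sum>_n H^{(2)}_{n+\<alpha>}/((n+c)(n+c+1)) is evaluated by summation by parts. Its value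
  telescopes in c: it is F(c) - F(c+1) - H_{\<alpha>-c}/(\<alpha>-c)^2 for the closed form F of the
  statement, which one checks by Abel summation of the finite sum inside F together with the
  recurrences H_{x+1} = H_x + 1/(x+1), H^{(m)}_{x+1} = H^{(m)}_x + 1/(x+1)^m.\<close>

lemma eventually_shift_ge_half:
  fixes x :: real
  shows "eventually (\<lambda>k. real (Suc k) / 2 \<le> real (Suc k) + x \<and> 1 \<le> real (Suc k) + x) sequentially"
  using eventually_ge_at_top[of "nat \<lceil>2 * \<bar>x\<bar>\<rceil> + 2"]
proof (rule eventually_mono)
  fix k assume "nat \<lceil>2 * \<bar>x\<bar>\<rceil> + 2 \<le> k"
  then have "2 * \<bar>x\<bar> + 2 \<le> real k" by linarith
  then show "real (Suc k) / 2 \<le> real (Suc k) + x \<and> 1 \<le> real (Suc k) + x" by auto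
qed

lemma summable_inverse_Suc_square: "summable (\<lambda>k. 1 / real (Suc k) ^ 2)"
  using inverse_squares_sums by (simp add: sums_iff add.commute)

lemma summable_inverse_shift_power:
  fixes x :: real
  assumes "2 \<le> m"
  shows "summable (\<lambda>k. 1 / (real (Suc k) + x) ^ m)"
proof (rule summable_comparison_test_ev[OF _ summable_mult[OF summable_inverse_Suc_square, of 4]])
  show "eventually (\<lambda>k. norm (1 / (real (Suc k) + x) ^ m) \<le> 4 * (1 / real (Suc k) ^ 2)) sequentially"
    using eventually_shift_ge_half[of x]
  proof (rule eventually_mono)
    fix k
    assume z: "real (Suc k) / 2 \<le> real (Suc k) + x \<and> 1 \<le> real (Suc k) + x"
    have "(real (Suc k) / 2) ^ 2 \<le> (real (Suc k) + x) ^ 2"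
      using z by (intro power_mono) auto
    also have "\<dots> \<le> (real (Suc k) + x) ^ m"
      using z assms by (intro power_increasing) auto
    finally show "norm (1 / (real (Suc k) + x) ^ m) \<le> 4 * (1 / real (Suc k) ^ 2)"
      using z by (simp add: field_simps power_divide del: of_nat_Suc)
  qed
qed

lemma summable_harmonic_shift_diff:
  fixes x :: real
  shows "summable (\<lambda>k. 1 / real (Suc k) - 1 / (real (Suc k) + x))"
proof (rule summable_comparison_test_ev[OF _ summable_mult[OF summable_inverse_Suc_square, of "2 * \<bar>x\<bar>"]])
  show "eventually (\<lambda>k. norm (1 / real (Suc k) - 1 / (real (Suc k) + x))
      \<le> 2 * \<bar>x\<bar> * (1 / real (Suc k) ^ 2)) sequentially"
    using eventually_shift_ge_half[of x]
  proof (rule eventually_mono)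
    fix k
    define n where "n = real (Suc k)"
    assume "real (Suc k) / 2 \<le> real (Suc k) + x \<and> 1 \<le> real (Suc k) + x"
    then have z: "n / 2 \<le> n + x" "1 \<le> n + x" and n: "0 < n" by (auto simp: n_def)
    have "1 / n - 1 / (n + x) = x / (n * (n + x))"
      using n z by (simp add: field_simps)
    then have "norm (1 / n - 1 / (n + x)) = \<bar>x\<bar> / (n * (n + x))"
      using n z by (simp add: abs_divide)
    also have "\<dots> \<le> \<bar>x\<bar> / (n * (n / 2))"
      using n z by (intro divide_left_mono mult_left_mono) auto
    finally show "norm (1 / real (Suc k) - 1 / (real (Suc k) + x)) \<le> 2 * \<bar>x\<bar> * (1 / real (Suc k) ^ 2)"
      by (simp add: n_def power2_eq_square mult.commute)
  qed
qed

lemma shifted_harm_sums: "(\<lambda>k. 1 / real (Suc k) - 1 / (real (Suc k) + x)) sums shifted_harm x"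
  unfolding shifted_harm_def by (intro summable_sums summable_harmonic_shift_diff)

lemma rzeta_sums: "2 \<le> m \<Longrightarrow> (\<lambda>k. 1 / real (Suc k) ^ m) sums rzeta m"
  unfolding rzeta_def using summable_inverse_shift_power[of m 0] by (simp add: summable_sums)

lemma shifted_harm_pow_sums:
  "2 \<le> m \<Longrightarrow> (\<lambda>k. 1 / real (Suc k) ^ m - 1 / (real (Suc k) + x) ^ m) sums shifted_harm_pow m x"
  unfolding shifted_harm_pow_def
  using summable_inverse_shift_power[of m 0] summable_inverse_shift_power[of m x]
  by (intro summable_sums summable_diff) auto

lemma inverse_shift_power_sums:
  assumes "2 \<le> m"
  shows "(\<lambda>k. 1 / (real (Suc k) + x) ^ m) sums (rzeta m - shifted_harm_pow m x)"
  using sums_diff[OF rzeta_sums[OF assms] shifted_harm_pow_sums[OF assms, of x]] by simp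

lemma abs_shifted_harm_pow2_le:
  assumes "0 \<le> y"
  shows "\<bar>shifted_harm_pow 2 y\<bar> \<le> rzeta 2"
proof -
  have tail: "(\<lambda>k. 1 / (real (Suc k) + y) ^ 2) sums (rzeta 2 - shifted_harm_pow 2 y)"
    by (rule inverse_shift_power_sums) simp
  have "0 \<le> rzeta 2 - shifted_harm_pow 2 y"
    by (rule sums_le[OF _ sums_zero tail]) simp
  moreover have "rzeta 2 - shifted_harm_pow 2 y \<le> rzeta 2"
    using assms by (intro sums_le[OF _ tail rzeta_sums] divide_left_mono power_mono) auto
  ultimately show ?thesis by linarith
qed

lemma sums_shift_telescoping:
  fixes a f :: "nat \<Rightarrow> real"
  assumes "f \<longlonglongrightarrow> 0" and "(\<lambda>k. a k - f k) sums A" and "(\<lambda>k. a k - f (Suc k)) sums B"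
  shows "B = A + f 0"
proof -
  have "(\<lambda>k. (a k - f (Suc k)) - (a k - f k)) sums (B - A)"
    using assms(2,3) by (rule sums_diff[rotated])
  moreover have "(\<lambda>k. (a k - f (Suc k)) - (a k - f k)) sums (f 0 - 0)"
    using telescope_sums'[OF assms(1)] by simp
  ultimately show ?thesis
    using sums_unique2 by fastforce
qed

lemma inverse_shift_tendsto_zero: "(\<lambda>k. 1 / (real (Suc k) + x)) \<longlonglongrightarrow> 0"
  by real_asymp

lemma inverse_shift_power_tendsto_zero:
  fixes x :: real
  assumes "0 < m"
  shows "(\<lambda>k. 1 / (real (Suc k) + x) ^ m) \<longlonglongrightarrow> 0"
proof -
  have "(\<lambda>k. (1 / (real (Suc k) + x)) ^ m) \<longlonglongrightarrow> 0 ^ m"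
    by (intro tendsto_power inverse_shift_tendsto_zero)
  then show ?thesis using assms by (simp add: power_one_over power_0_left)
qed

lemma shifted_harm_plus_one: "shifted_harm (x + 1) = shifted_harm x + 1 / (x + 1)"
proof -
  have "(\<lambda>k. 1 / real (Suc k) - 1 / (real (Suc (Suc k)) + x)) sums shifted_harm (x + 1)"
    using shifted_harm_sums[of "x + 1"] by (simp add: ac_simps)
  from sums_shift_telescoping[OF inverse_shift_tendsto_zero shifted_harm_sums this]
  show ?thesis by (simp add: add.commute)
qed

lemma shifted_harm_pow_plus_one:
  assumes "2 \<le> m"
  shows "shifted_harm_pow m (x + 1) = shifted_harm_pow m x + 1 / (x + 1) ^ m"
proof -
  have "(\<lambda>k. 1 / real (Suc k) ^ m - 1 / (real (Suc (Suc k)) + x) ^ m) sums shifted_harm_pow m (x + 1)"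
    using shifted_harm_pow_sums[OF assms, of "x + 1"] by (simp add: ac_simps)
  from sums_shift_telescoping[OF inverse_shift_power_tendsto_zero shifted_harm_pow_sums[OF assms] this]
  show ?thesis using assms by (simp add: add.commute)
qed

lemma shifted_harm_add_nat:
  "shifted_harm (x + real n) = shifted_harm x + (\<Sum>j=1..n. 1 / (x + real j))"
proof (induction n)
  case (Suc n)
  have "shifted_harm (x + real (Suc n)) = shifted_harm (x + real n) + 1 / (x + real (Suc n))"
    using shifted_harm_plus_one[of "x + real n"] by (simp add: ac_simps)
  with Suc show ?case by simp
qed simp

lemma shifted_harm_pow_add_nat:
  assumes "2 \<le> m"
  shows "shifted_harm_pow m (x + real n) = shifted_harm_pow m x + (\<Sum>j=1..n. 1 / (x + real j) ^ m)"
proof (induction n)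
  case (Suc n)
  have "shifted_harm_pow m (x + real (Suc n))
      = shifted_harm_pow m (x + real n) + 1 / (x + real (Suc n)) ^ m"
    using shifted_harm_pow_plus_one[OF assms, of "x + real n"] by (simp add: ac_simps)
  with Suc show ?case by simp
qed simp

lemma shifted_harm_of_nat: "shifted_harm (real n) = (\<Sum>j=1..n. 1 / real j)"
  using shifted_harm_add_nat[of 0 n] by (simp add: shifted_harm_def)

definition square_linear_series :: "real \<Rightarrow> real \<Rightarrow> real" where
  "square_linear_series g c =
     (shifted_harm g - shifted_harm c) / (g - c) ^ 2 - (rzeta 2 - shifted_harm_pow 2 g) / (g - c)"

lemma square_linear_series_sums:
  fixes g c :: real
  assumes g: "\<And>n. real (Suc n) + g \<noteq> 0" and c: "\<And>n. real (Suc n) + c \<noteq> 0" and "g \<noteq> c"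
  shows "(\<lambda>n. 1 / ((real (Suc n) + g) ^ 2 * (real (Suc n) + c))) sums square_linear_series g c"
proof -
  have "(\<lambda>n. ((1 / real (Suc n) - 1 / (real (Suc n) + g)) - (1 / real (Suc n) - 1 / (real (Suc n) + c)))
        / (g - c) ^ 2 - 1 / (real (Suc n) + g) ^ 2 / (g - c)) sums square_linear_series g c"
    unfolding square_linear_series_def
    by (intro sums_diff sums_divide shifted_harm_sums inverse_shift_power_sums) simp
  moreover have "((1 / s - 1 / (s + g)) - (1 / s - 1 / (s + c))) / (g - c) ^ 2 - 1 / (s + g) ^ 2 / (g - c)
      = 1 / ((s + g) ^ 2 * (s + c))" if "s \<noteq> 0" "s + g \<noteq> 0" "s + c \<noteq> 0" for s
  proof -
    have "g - c \<noteq> 0" using \<open>g \<noteq> c\<close> by simp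
    then show ?thesis using that by (simp add: divide_simps) (simp add: algebra_simps power2_eq_square)
  qed
  ultimately show ?thesis using g c by simp
qed

lemma square_two_linear_sums:
  fixes g r k :: real
  assumes "\<And>n. real (Suc n) + g \<noteq> 0" "\<And>n. real (Suc n) + r \<noteq> 0" "\<And>n. real (Suc n) + k \<noteq> 0"
    and "g \<noteq> r" "g \<noteq> k" "r \<noteq> k"
  shows "(\<lambda>n. 1 / (real (Suc n) + g) ^ 2 / ((real (Suc n) + r) * (real (Suc n) + k)))
    sums ((square_linear_series g r - square_linear_series g k) / (k - r))"
proof -
  have "(\<lambda>n. (1 / ((real (Suc n) + g) ^ 2 * (real (Suc n) + r))
                - 1 / ((real (Suc n) + g) ^ 2 * (real (Suc n) + k))) / (k - r))
    sums ((square_linear_series g r - square_linear_series g k) / (k - r))"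
    using assms by (intro sums_divide sums_diff square_linear_series_sums) auto
  moreover have "(1 / ((s + g) ^ 2 * (s + r)) - 1 / ((s + g) ^ 2 * (s + k))) / (k - r)
      = 1 / (s + g) ^ 2 / ((s + r) * (s + k))" if "s + g \<noteq> 0" "s + r \<noteq> 0" "s + k \<noteq> 0" for s
  proof -
    have "k - r \<noteq> 0" using \<open>r \<noteq> k\<close> by simp
    then show ?thesis using that by (simp add: divide_simps)
  qed
  ultimately show ?thesis using assms(1-3) by simp
qed

lemma shifted_harm_pow2_over_shift_tendsto_zero:
  fixes a c :: real
  assumes "0 \<le> a" "0 \<le> c"
  shows "(\<lambda>n. shifted_harm_pow 2 (real (Suc n) + a) / (real (Suc n) + c)) \<longlonglongrightarrow> 0"
proof (rule Lim_null_comparison)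
  show "eventually (\<lambda>n. norm (shifted_harm_pow 2 (real (Suc n) + a) / (real (Suc n) + c))
      \<le> rzeta 2 * (1 / real (Suc n))) sequentially"
  proof (intro always_eventually allI)
    fix n
    have "norm (shifted_harm_pow 2 (real (Suc n) + a) / (real (Suc n) + c))
        = \<bar>shifted_harm_pow 2 (real (Suc n) + a)\<bar> / (real (Suc n) + c)"
      using assms by (simp add: abs_divide)
    also have "\<dots> \<le> rzeta 2 / (real (Suc n) + c)"
      using assms by (intro divide_right_mono abs_shifted_harm_pow2_le) auto
    also have "\<dots> \<le> rzeta 2 / real (Suc n)"
      using assms abs_shifted_harm_pow2_le[of 0] by (intro divide_left_mono) auto
    finally show "norm (shifted_harm_pow 2 (real (Suc n) + a) / (real (Suc n) + c))
        \<le> rzeta 2 * (1 / real (Suc n))" by simp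
  qed
  show "(\<lambda>n. rzeta 2 * (1 / real (Suc n))) \<longlonglongrightarrow> 0"
    using tendsto_mult_right_zero[OF LIMSEQ_inverse_real_of_nat] by (simp add: inverse_eq_divide)
qed

text \<open>Summation by parts against 1/((n+c)(n+c+1)) = 1/(n+c) - 1/(n+c+1).\<close>
lemma shifted_harm_pow2_consecutive_sums:
  fixes a c :: real
  assumes "0 \<le> a" "0 \<le> c" "a \<noteq> c"
  shows "(\<lambda>n. shifted_harm_pow 2 (real (Suc n) + a) / ((real (Suc n) + c) * (real (Suc n) + c + 1)))
    sums (shifted_harm_pow 2 a / (c + 1) + square_linear_series a c)"
proof -
  define h where "h n = shifted_harm_pow 2 (real (Suc n) + a) / (real (Suc n) + c)" for n
  define q where "q n = 1 / ((real (Suc n) + a) ^ 2 * (real (Suc n) + c))" for n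
  have "q sums square_linear_series a c"
    unfolding q_def using assms by (intro square_linear_series_sums) auto
  then have q: "(\<lambda>n. q (Suc n)) sums (square_linear_series a c - q 0)"
    by (simp add: sums_Suc_iff)
  have h: "(\<lambda>n. h n - h (Suc n)) sums (h 0 - 0)"
    unfolding h_def using assms by (intro telescope_sums' shifted_harm_pow2_over_shift_tendsto_zero)
  have H2_step: "shifted_harm_pow 2 (1 + s + a) = shifted_harm_pow 2 (s + a) + 1 / (1 + s + a) ^ 2" for s
    using shifted_harm_pow_plus_one[of 2 "s + a"] by (simp add: ac_simps)
  have parts: "shifted_harm_pow 2 (s + a) / ((s + c) * (s + c + 1))
      = (shifted_harm_pow 2 (s + a) / (s + c) - shifted_harm_pow 2 (1 + s + a) / (1 + s + c))
        + 1 / ((1 + s + a) ^ 2 * (1 + s + c))" if "0 < s" for s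
  proof -
    have "(1 + s + a) ^ 2 \<noteq> 0" "s + c \<noteq> 0" "1 + s + c \<noteq> 0"
      using assms that by auto
    then show ?thesis unfolding H2_step
      by (simp add: divide_simps) (simp add: algebra_simps power2_eq_square)
  qed
  have "(\<lambda>n. shifted_harm_pow 2 (real (Suc n) + a) / ((real (Suc n) + c) * (real (Suc n) + c + 1)))
      = (\<lambda>n. (h n - h (Suc n)) + q (Suc n))"
    unfolding h_def q_def of_nat_Suc[of "Suc _"] by (intro ext parts) simp
  moreover have
    "h 0 + (square_linear_series a c - q 0) = shifted_harm_pow 2 a / (c + 1) + square_linear_series a c"
  proof -
    have "(a + 1) ^ 2 \<noteq> 0" "c + 1 \<noteq> 0" using assms by auto
    then show ?thesis unfolding h_def q_def using H2_step[of 0]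
      by (simp add: divide_simps) (simp add: algebra_simps power2_eq_square)
  qed
  ultimately show ?thesis
    using sums_add[OF h q] by (simp only: diff_zero)
qed

lemma shifted_harm_pow2_abel_summation:
  "shifted_harm_pow 2 y + (\<Sum>j=1..c. shifted_harm_pow 2 (y + real j) * (1 / real (Suc j) - 1 / real j))
   = shifted_harm_pow 2 (y + real c) / (real c + 1) - (\<Sum>j=1..c. 1 / ((y + real j) ^ 2 * real j))"
proof (induction c)
  case (Suc c)
  define A where "A = shifted_harm_pow 2 (y + real c)"
  define B where "B = 1 / (y + real (Suc c)) ^ 2"
  define S where "S = (\<Sum>j=1..c. 1 / ((y + real j) ^ 2 * real j))"
  define n where "n = real c + 1"
  have rec: "shifted_harm_pow 2 (y + real (Suc c)) = A + B"
    using shifted_harm_pow_plus_one[of 2 "y + real c"] by (simp add: A_def B_def ac_simps)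
  have "shifted_harm_pow 2 y
        + (\<Sum>j=1..Suc c. shifted_harm_pow 2 (y + real j) * (1 / real (Suc j) - 1 / real j))
      = (A / n - S) + (A + B) * (1 / (n + 1) - 1 / n)"
    using Suc.IH rec by (simp add: A_def S_def n_def ac_simps)
  also have "\<dots> = (A + B) / (n + 1) - (S + B / n)"
    by (simp add: n_def algebra_simps add_divide_distrib)
  finally show ?case
    using rec by (simp add: S_def B_def n_def ac_simps)
qed simp

lemma sum_inverse_square_linear:
  assumes "0 < y"
  shows "(\<Sum>j=1..c. 1 / ((y + real j) ^ 2 * real j)) =
    shifted_harm (real c) / y ^ 2 - (shifted_harm_pow 2 (y + real c) - shifted_harm_pow 2 y) / y
      - (shifted_harm (y + real c) - shifted_harm y) / y ^ 2"
proof -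
  have "1 / ((y + real j) ^ 2 * real j)
      = (1 / real j) / y ^ 2 - 1 / (y + real j) ^ 2 / y - 1 / (y + real j) / y ^ 2" if "1 \<le> j" for j
  proof -
    have "y + real j \<noteq> 0" "real j \<noteq> 0" using assms that by auto
    with assms show ?thesis by (simp add: divide_simps) (simp add: algebra_simps power2_eq_square)
  qed
  then have "(\<Sum>j=1..c. 1 / ((y + real j) ^ 2 * real j)) =
      (\<Sum>j=1..c. 1 / real j) / y ^ 2 - (\<Sum>j=1..c. 1 / (y + real j) ^ 2) / y
      - (\<Sum>j=1..c. 1 / (y + real j)) / y ^ 2"
    by (simp add: sum_subtractf sum_divide_distrib)
  then show ?thesis
    by (simp add: shifted_harm_of_nat shifted_harm_pow_add_nat shifted_harm_add_nat)
qed

text \<open>The closed form F(a, c) of the paper; the theorem's first bracket is F(\<alpha>, r) - F(\<alpha>, k)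
  up to a finite sum.\<close>
definition consecutive_antidiff :: "real \<Rightarrow> nat \<Rightarrow> real" where
  "consecutive_antidiff a c =
     (real c - a) * (\<Sum>j=1..c. shifted_harm_pow 2 (a + real j - real c) / (real j * (a + real j - real c)))
     + 2 * shifted_harm_pow 3 (a - real c) + 2 * shifted_harm (a - real c) * shifted_harm_pow 2 (a - real c)
     - shifted_harm (a - real c) * rzeta 2"

lemma consecutive_antidiff_eq:
  assumes "0 < y"
  shows "consecutive_antidiff (y + real c) c =
    (\<Sum>j=1..c. shifted_harm_pow 2 (y + real j) * (1 / (y + real j) - 1 / real j))
    + 2 * shifted_harm_pow 3 y + 2 * shifted_harm y * shifted_harm_pow 2 y - shifted_harm y * rzeta 2"
proof -
  have "- y * (shifted_harm_pow 2 (y + real j) / (real j * (y + real j)))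
      = shifted_harm_pow 2 (y + real j) * (1 / (y + real j) - 1 / real j)" if "1 \<le> j" for j
  proof -
    have "y + real j \<noteq> 0" "real j \<noteq> 0" using assms that by auto
    then show ?thesis by (simp add: divide_simps)
  qed
  then show ?thesis
    unfolding consecutive_antidiff_def by (simp add: sum_distrib_left ac_simps)
qed

lemma consecutive_antidiff_step:
  assumes "real c + 1 < a"
  shows "consecutive_antidiff a c - consecutive_antidiff a (Suc c) - shifted_harm (a - real c) / (a - real c) ^ 2
    = shifted_harm_pow 2 a / (real c + 1) + square_linear_series a c"
proof -
  define y where "y = a - real c"
  have y: "1 < y" and a: "a = y + real c" using assms by (auto simp: y_def)
  define W where
    "W z n = (\<Sum>j=1..n. shifted_harm_pow 2 (z + real j) * (1 / (z + real j) - 1 / real j))" for z n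
  define U where "U = (\<Sum>j=1..c. 1 / ((y + real j) ^ 2 * real j))"
  have W_shift: "W (y - 1) (Suc c) = shifted_harm_pow 2 y * (1 / y - 1)
      + (\<Sum>j=1..c. shifted_harm_pow 2 (y + real j) * (1 / (y + real j) - 1 / real (Suc j)))"
    unfolding W_def
    by (simp add: sum.atLeast_Suc_atMost sum.shift_bounds_cl_Suc_ivl algebra_simps del: sum.cl_ivl_Suc)
  have W_shift_eq:
    "W (y - 1) (Suc c) = W y c - (shifted_harm_pow 2 a / (real c + 1) - U - shifted_harm_pow 2 y / y)"
    using shifted_harm_pow2_abel_summation[of y c] unfolding W_shift unfolding a U_def W_def
    by (simp add: right_diff_distrib sum_subtractf)
  have U: "U = shifted_harm (real c) / y ^ 2 - (shifted_harm_pow 2 a - shifted_harm_pow 2 y) / y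
      - (shifted_harm a - shifted_harm y) / y ^ 2"
    unfolding U_def a using y by (intro sum_inverse_square_linear) simp
  have H: "shifted_harm y = shifted_harm (y - 1) + 1 / y"
    using shifted_harm_plus_one[of "y - 1"] by simp
  have H2: "shifted_harm_pow 2 y = shifted_harm_pow 2 (y - 1) + 1 / y ^ 2"
    using shifted_harm_pow_plus_one[of 2 "y - 1"] by simp
  have H3: "shifted_harm_pow 3 y = shifted_harm_pow 3 (y - 1) + 1 / y ^ 3"
    using shifted_harm_pow_plus_one[of 3 "y - 1"] by simp
  have F: "consecutive_antidiff a c = W y c + 2 * shifted_harm_pow 3 y
      + 2 * shifted_harm y * shifted_harm_pow 2 y - shifted_harm y * rzeta 2"
    unfolding a W_def using y by (intro consecutive_antidiff_eq) simp
  have F_Suc: "consecutive_antidiff a (Suc c) = W (y - 1) (Suc c) + 2 * shifted_harm_pow 3 (y - 1)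
      + 2 * shifted_harm (y - 1) * shifted_harm_pow 2 (y - 1) - shifted_harm (y - 1) * rzeta 2"
    using consecutive_antidiff_eq[of "y - 1" "Suc c"] y unfolding a W_def by (simp add: ac_simps)
  have nonzero: "y \<noteq> 0" "real c + 1 \<noteq> 0" using y by auto
  show ?thesis
    unfolding F F_Suc W_shift_eq square_linear_series_def y_def[symmetric] U H3 H2 H
    by (simp add: divide_simps nonzero) algebra
qed

lemma inverse_product_telescoping:
  fixes s :: real and r k :: nat
  assumes "0 < s" and "r < k"
  shows "1 / ((s + real r) * (s + real k))
    = (\<Sum>c=r..<k. 1 / ((s + real c) * (s + real c + 1))) / (real k - real r)"
proof -
  have "(\<Sum>c=r..<k. 1 / ((s + real c) * (s + real c + 1)))
      = - (\<Sum>c=r..<k. 1 / (s + real (Suc c)) - 1 / (s + real c))"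
    unfolding sum_negf[symmetric] using assms(1) by (intro sum.cong refl) (simp add: divide_simps)
  also have "\<dots> = 1 / (s + real r) - 1 / (s + real k)"
    using sum_Suc_diff'[of r k "\<lambda>c. 1 / (s + real c)"] assms(2) by simp
  finally show ?thesis
    using assms by (simp add: divide_simps)
qed

lemma shifted_harm_pow2_over_product_sums:
  fixes r k :: nat and a :: real
  assumes "r < k" and "real k < a"
  shows "(\<lambda>n. shifted_harm_pow 2 (real (Suc n) + a) / ((real (Suc n) + real r) * (real (Suc n) + real k)))
    sums ((consecutive_antidiff a r - consecutive_antidiff a k
           - (\<Sum>c=r..<k. shifted_harm (a - real c) / (a - real c) ^ 2)) / (real k - real r))"
proof -
  have "(\<lambda>n. (\<Sum>c=r..<k. shifted_harm_pow 2 (real (Suc n) + a)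
                            / ((real (Suc n) + real c) * (real (Suc n) + real c + 1))) / (real k - real r))
    sums ((\<Sum>c=r..<k. shifted_harm_pow 2 a / (real c + 1) + square_linear_series a (real c)) / (real k - real r))"
    using assms by (intro sums_divide sums_sum shifted_harm_pow2_consecutive_sums) auto
  moreover have "shifted_harm_pow 2 (s + a) / ((s + real r) * (s + real k))
      = (\<Sum>c=r..<k. shifted_harm_pow 2 (s + a) / ((s + real c) * (s + real c + 1))) / (real k - real r)"
    if "0 < s" for s
  proof -
    have "shifted_harm_pow 2 (s + a) / ((s + real r) * (s + real k))
        = shifted_harm_pow 2 (s + a) * (1 / ((s + real r) * (s + real k)))" by simp
    also have "\<dots> = shifted_harm_pow 2 (s + a) * (\<Sum>c=r..<k. 1 / ((s + real c) * (s + real c + 1)))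
        / (real k - real r)"
      unfolding inverse_product_telescoping[OF that assms(1)] by simp
    finally show ?thesis by (simp add: sum_distrib_left)
  qed
  moreover have "(\<Sum>c=r..<k. shifted_harm_pow 2 a / (real c + 1) + square_linear_series a (real c))
      = (\<Sum>c=r..<k. consecutive_antidiff a c - consecutive_antidiff a (Suc c)
                    - shifted_harm (a - real c) / (a - real c) ^ 2)"
    using assms by (intro sum.cong refl consecutive_antidiff_step[symmetric]) auto
  moreover have "(\<Sum>c=r..<k. consecutive_antidiff a c - consecutive_antidiff a (Suc c))
      = consecutive_antidiff a r - consecutive_antidiff a k"
    using sum_Suc_diff'[OF less_imp_le[OF assms(1)], of "consecutive_antidiff a"]
    by (simp add: sum_subtractf)
  ultimately show ?thesis
    by (simp add: sum_subtractf)
qed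

lemma shifted_harm_pow2_sub_nat_over_product_sums:
  fixes r k m :: nat and a :: real
  assumes "r < k" and "real k < a"
    and not_neg_int: "\<And>i. 1 \<le> i \<Longrightarrow> a - real m \<noteq> - real i"
    and "\<And>j. j \<in> {1..m} \<Longrightarrow> a + real j - real m \<noteq> real r \<and> a + real j - real m \<noteq> real k"
  shows "(\<lambda>n. shifted_harm_pow 2 (real (Suc n) + a - real m) / ((real (Suc n) + real r) * (real (Suc n) + real k)))
    sums ((consecutive_antidiff a r - consecutive_antidiff a k
           - (\<Sum>c=r..<k. shifted_harm (a - real c) / (a - real c) ^ 2)
           - (\<Sum>j=1..m. square_linear_series (a + real j - real m) (real r)
                        - square_linear_series (a + real j - real m) (real k))) / (real k - real r))"
proof -
  have "real (Suc n) + (a + real j - real m) \<noteq> 0" if "j \<in> {1..m}" for j n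
    using not_neg_int[of "j + Suc n"] by (auto simp: algebra_simps)
  then have "(\<lambda>n. shifted_harm_pow 2 (real (Suc n) + a) / ((real (Suc n) + real r) * (real (Suc n) + real k))
      - (\<Sum>j=1..m. 1 / (real (Suc n) + (a + real j - real m)) ^ 2
                    / ((real (Suc n) + real r) * (real (Suc n) + real k))))
    sums ((consecutive_antidiff a r - consecutive_antidiff a k
           - (\<Sum>c=r..<k. shifted_harm (a - real c) / (a - real c) ^ 2)) / (real k - real r)
          - (\<Sum>j=1..m. (square_linear_series (a + real j - real m) (real r)
                        - square_linear_series (a + real j - real m) (real k)) / (real k - real r)))"
    using assms
    by (intro sums_diff sums_sum shifted_harm_pow2_over_product_sums square_two_linear_sums) auto
  moreover have "shifted_harm_pow 2 (s + a - real m)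
      = shifted_harm_pow 2 (s + a) - (\<Sum>j=1..m. 1 / (s + (a + real j - real m)) ^ 2)" for s
    using shifted_harm_pow_add_nat[of 2 "s + a - real m" m] by (simp add: algebra_simps)
  ultimately show ?thesis
    by (simp add: diff_divide_distrib sum_divide_distrib)
qed

lemma consecutive_antidiff_diff_eq:
  fixes r k :: nat and a :: real
  assumes "r < k"
  shows "consecutive_antidiff a r - consecutive_antidiff a k
      - (\<Sum>c=r..<k. shifted_harm (a - real c) / (a - real c) ^ 2)
    = (real r - a) * (\<Sum>j=1..r. shifted_harm_pow 2 (a + real j - real r) / (real j * (a + real j - real r)))
      - (real k - a) * (\<Sum>j=1..k. shifted_harm_pow 2 (a + real j - real k) / (real j * (a + real j - real k)))
      - (\<Sum>j=1..k-r. shifted_harm (a + real j - real k) / (a + real j - real k)^2)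
      + 2 * shifted_harm_pow 3 (a - real r)
      + shifted_harm (a - real k) * rzeta 2
      + 2 * shifted_harm (a - real r) * shifted_harm_pow 2 (a - real r)
      - 2 * shifted_harm_pow 3 (a - real k)
      - shifted_harm (a - real r) * rzeta 2
      - 2 * shifted_harm (a - real k) * shifted_harm_pow 2 (a - real k)"
proof -
  have "(\<Sum>j=1..k-r. shifted_harm (a + real j - real k) / (a + real j - real k) ^ 2)
      = (\<Sum>c=r..<k. shifted_harm (a - real c) / (a - real c) ^ 2)"
    using assms
    by (intro sum.reindex_bij_witness[of _ "\<lambda>j. k - j" "\<lambda>c. k - c"]) (auto simp: of_nat_diff algebra_simps)
  then show ?thesis
    unfolding consecutive_antidiff_def by linarith
qed

lemma sum_square_linear_series_diff_eq:
  "(\<Sum>j\<in>J. square_linear_series (g j) r - square_linear_series (g j) k)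
    = (\<Sum>j\<in>J. (shifted_harm (g j) - shifted_harm r) / (g j - r)^2)
      - (\<Sum>j\<in>J. (rzeta 2 - shifted_harm_pow 2 (g j)) / (g j - r))
      - (\<Sum>j\<in>J. (shifted_harm (g j) - shifted_harm k) / (g j - k)^2)
      + (\<Sum>j\<in>J. (rzeta 2 - shifted_harm_pow 2 (g j)) / (g j - k))"
  unfolding square_linear_series_def sum_subtractf by linarith

theorem corollary2p5:
  fixes r k m :: nat and \<alpha> :: real
  assumes "r > 0" and "k > 0" and "m > 0"
    and "\<alpha> > real k" and "k > r"
    and "\<forall>i::nat. i \<ge> 1 \<longrightarrow> \<alpha> - real m \<noteq> - real i"
    and "\<forall>j\<in>{1..m}. \<alpha> \<noteq> real m + real r - real j \<and> \<alpha> \<noteq> real m + real k - real j"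
  shows "(\<lambda>n. shifted_harm_pow 2 (real (Suc n) + \<alpha> - real m)
              / ((real (Suc n) + real r) * (real (Suc n) + real k)))
    sums
     (1 / (real k - real r) *
       ( (real r - \<alpha>) * (\<Sum>j=1..r. shifted_harm_pow 2 (\<alpha> + real j - real r) / (real j * (\<alpha> + real j - real r)))
       - (real k - \<alpha>) * (\<Sum>j=1..k. shifted_harm_pow 2 (\<alpha> + real j - real k) / (real j * (\<alpha> + real j - real k)))
       - (\<Sum>j=1..k-r. shifted_harm (\<alpha> + real j - real k) / (\<alpha> + real j - real k)^2)
       + 2 * shifted_harm_pow 3 (\<alpha> - real r)
       + shifted_harm (\<alpha> - real k) * rzeta 2
       + 2 * shifted_harm (\<alpha> - real r) * shifted_harm_pow 2 (\<alpha> - real r)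
       - 2 * shifted_harm_pow 3 (\<alpha> - real k)
       - shifted_harm (\<alpha> - real r) * rzeta 2
       - 2 * shifted_harm (\<alpha> - real k) * shifted_harm_pow 2 (\<alpha> - real k))
     - 1 / (real k - real r) *
       ( (\<Sum>j=1..m. (shifted_harm (\<alpha> + real j - real m) - shifted_harm (real r)) / (\<alpha> + real j - real m - real r)^2)
       - (\<Sum>j=1..m. (rzeta 2 - shifted_harm_pow 2 (\<alpha> + real j - real m)) / (\<alpha> + real j - real m - real r))
       - (\<Sum>j=1..m. (shifted_harm (\<alpha> + real j - real m) - shifted_harm (real k)) / (\<alpha> + real j - real m - real k)^2)
       + (\<Sum>j=1..m. (rzeta 2 - shifted_harm_pow 2 (\<alpha> + real j - real m)) / (\<alpha> + real j - real m - real k))))"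
proof -
  have "\<alpha> + real j - real m \<noteq> real r \<and> \<alpha> + real j - real m \<noteq> real k" if "j \<in> {1..m}" for j
    using bspec[OF assms(7) that] by linarith
  then show ?thesis
    using shifted_harm_pow2_sub_nat_over_product_sums[of r k \<alpha> m] assms(4-6)
    unfolding consecutive_antidiff_diff_eq[OF \<open>k > r\<close>] sum_square_linear_series_diff_eq
    by (simp add: diff_divide_distrib)
qed

end
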